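(* Let $\alpha=(\alpha_1,\dots,\alpha_\ell)$ be a composition. The antipode $\mathcal{S}$ of $\mathrm{QSym}$ satisfies $\mathcal{S}(S_\alpha)=(-1)^\ell S_{(\alpha_\ell,\dots,\alpha_1)}$.
   Context: $\mathrm{QSym}$ is the Hopf algebra of quasisymmetric functions with monomial basis $M_\alpha=\sum_{i_1<\cdots<i_\ell}x_{i_1}^{\alpha_1}\cdots x_{i_\ell}^{\alpha_\ell}$, product the ordinary product of power series and coproduct $\Delta(M_\alpha)=\sum_{\beta\gamma=\alpha}M_\beta\otimes M_\gamma$ (deconcatenation). For compositions $\alpha,\beta$ of $n$, $\beta\le\alpha$ means $\{\beta_1,\beta_1+\beta_2,\dots\}\subseteq\{\alpha_1,\alpha_1+\alpha_2,\dots\}$ (partial sums, excluding the total). Shuffle functions: for $\alpha=(\alpha_1,\dots,\alpha_\ell)$ let $\mathrm{OtE}(\alpha)=\{i:\alpha_i\text{ odd},\ \alpha_{i+1}\text{ even}\}=\{i_1<\cdots<i_k\}$ and $m_o(\alpha)=(\alpha_1+\cdots+\alpha_{i_1},\ \alpha_{i_1+1}+\cdots+\alpha_{i_2},\ \dots,\ \alpha_{i_k+1}+\cdots+\alpha_\ell)$. For $m_o(\alpha)\le\beta\le\alpha$, each part $\beta_i$ is a sum of a block of consecutive parts of $\alpha$; with $\mathrm{O}(i),\mathrm{E}(i)$ the numbers of odd and even parts of that block put $c_\alpha^\beta=\prod_i\frac{1}{\mathrm{O}(i)!\mathrm{E}(i)!}$. Then $S_\alpha=\sum_{m_o(\alpha)\le\beta\le\alpha}c_\alpha^\beta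 M_\beta$. *)

theory Defs
  imports Complex_Main "HOL-Library.Poly_Mapping"
begin

text \<open>A monomial is a finitely supported exponent vector; a formal power series
  is its coefficient function.\<close>
type_synonym fps_q = "(nat \<Rightarrow>\<^sub>0 nat) \<Rightarrow> rat"

definition ps_one :: fps_q where
  "ps_one e = (if e = 0 then 1 else 0)"

definition ps_mult :: "fps_q \<Rightarrow> fps_q \<Rightarrow> fps_q" where
  "ps_mult f g e = (\<Sum>p\<in>{p. fst p + snd p = e}. f (fst p) * g (snd p))"

definition ps_add :: "fps_q \<Rightarrow> fps_q \<Rightarrow> fps_q" where
  "ps_add f g e = f e + g e"

definition ps_neg :: "fps_q \<Rightarrow> fps_q" where
  "ps_neg f e = - f e"

definition ps_zero :: fps_q where
  "ps_zero e = 0"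

text \<open>M_alpha = sum over i_1 < ... < i_l of x_{i_1}^{alpha_1} ... x_{i_l}^{alpha_l}:
  the coefficient of a monomial is 1 iff its nonzero exponents, read in increasing
  order of the variable index, form alpha.\<close>
definition monoM :: "nat list \<Rightarrow> fps_q" where
  "monoM \<alpha> e = (if map (Poly_Mapping.lookup e) (sorted_list_of_set (Poly_Mapping.keys e)) = \<alpha> then 1 else 0)"

text \<open>The antipode of the connected graded bialgebra QSym (product of power series,
  deconcatenation coproduct) is determined by
  sum_{beta gamma = alpha} S(M_beta) M_gamma = epsilon(M_alpha);
  solving for the term with gamma empty gives the recursion below.\<close>
function antipodeM :: "nat list \<Rightarrow> fps_q" where
  "antipodeM \<alpha> = (if \<alpha> = [] then ps_one
     else ps_neg (foldr ps_add
       (map (\<lambda>i. ps_mult (antipodeM (take i \<alpha>)) (monoM (drop i \<alpha>))) [0..<length \<alpha>])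
       ps_zero))"
  by pat_completeness auto
termination by (relation "measure length") auto

definition is_comp :: "nat list \<Rightarrow> bool" where
  "is_comp \<alpha> \<longleftrightarrow> (\<forall>a\<in>set \<alpha>. 0 < a)"

definition psums :: "nat list \<Rightarrow> nat set" where
  "psums \<alpha> = {sum_list (take i \<alpha>) | i. 0 < i \<and> i < length \<alpha>}"

definition comp_le :: "nat list \<Rightarrow> nat list \<Rightarrow> bool" where
  "comp_le \<beta> \<alpha> \<longleftrightarrow> psums \<beta> \<subseteq> psums \<alpha>"

text \<open>The composition of n whose set of partial sums is S.\<close>
definition comp_of_set :: "nat \<Rightarrow> nat set \<Rightarrow> nat list" where
  "comp_of_set n S = (let L = 0 # sorted_list_of_set S @ [n]
     in map (\<lambda>i. L ! Suc i - L ! i) [0..<length L - 1])"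

text \<open>OtE(alpha), 1-indexed: alpha_i odd and alpha_{i+1} even.\<close>
definition OtE :: "nat list \<Rightarrow> nat set" where
  "OtE \<alpha> = {i. 1 \<le> i \<and> i < length \<alpha> \<and> odd (\<alpha> ! (i - 1)) \<and> even (\<alpha> ! i)}"

definition m_o :: "nat list \<Rightarrow> nat list" where
  "m_o \<alpha> = (if \<alpha> = [] then []
     else comp_of_set (sum_list \<alpha>) ((\<lambda>i. sum_list (take i \<alpha>)) ` OtE \<alpha>))"

text \<open>Blocks of consecutive parts of alpha whose sums are the parts of beta (for beta <= alpha).\<close>
fun blocks :: "nat list \<Rightarrow> nat list \<Rightarrow> nat list list" where
  "blocks \<alpha> [] = []"
| "blocks \<alpha> (b # \<beta>) =
     (let k = (LEAST k. sum_list (take k \<alpha>) = b) in take k \<alpha> # blocks (drop k \<alpha>) \<beta>)"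

definition coeff_c :: "nat list \<Rightarrow> nat list \<Rightarrow> rat" where
  "coeff_c \<alpha> \<beta> = prod_list (map (\<lambda>B. 1 / (of_nat (fact (length (filter odd B)))
                                          * of_nat (fact (length (filter even B)))))
                               (blocks \<alpha> \<beta>))"

definition shuffle_index :: "nat list \<Rightarrow> nat list set" where
  "shuffle_index \<alpha> = {\<beta>. is_comp \<beta> \<and> sum_list \<beta> = sum_list \<alpha>
                          \<and> comp_le (m_o \<alpha>) \<beta> \<and> comp_le \<beta> \<alpha>}"

definition shuffleS :: "nat list \<Rightarrow> fps_q" where
  "shuffleS \<alpha> e = (\<Sum>\<beta>\<in>shuffle_index \<alpha>. coeff_c \<alpha> \<beta> * monoM \<beta> e)"

text \<open>The antipode, extended linearly, applied to S_alpha = sum c_alpha^beta M_beta.\<close>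
definition antipode_shuffleS :: "nat list \<Rightarrow> fps_q" where
  "antipode_shuffleS \<alpha> e = (\<Sum>\<beta>\<in>shuffle_index \<alpha>. coeff_c \<alpha> \<beta> * antipodeM \<beta> e)"

end

theory Submission
  imports Defs
begin

text \<open>
  The antipode acts on the monomial basis by \<open>S(M\<^sub>\<beta>) = (-1)\<^bsup>\<ell>(\<beta>)\<^esup> \<Sum> M\<^sub>\<gamma>\<close>, summed over
  the coarsenings \<open>\<gamma>\<close> of \<open>rev \<beta>\<close>: substituted into the defining recursion
  \<open>\<Sum>\<^sub>i S(M\<^bsub>\<beta>\<^sub>1\<^sub>\<dots>\<^sub>\<beta>\<^sub>i\<^esub>) M\<^bsub>\<beta>\<^sub>i\<^sub>+\<^sub>1\<^sub>\<dots>\<^sub>\<beta>\<^sub>\<ell>\<^esub> = 0\<close>, the coefficients telescope.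

  \<open>S\<^sub>\<alpha>\<close> is a sum over the decompositions of \<open>\<alpha>\<close> into consecutive blocks \<open>B\<close>, each block
  weighted by \<open>w(B) = 1/(O(B)! E(B)!)\<close> if no odd part of \<open>B\<close> is followed by an even one, and by
  \<open>0\<close> otherwise. Applying \<open>S\<close> and grouping consecutive blocks into superblocks \<open>A\<close> gives a sum
  over decompositions of \<open>\<alpha>\<close> into superblocks, each weighted by the sum of \<open>\<Prod>(-w(B))\<close> over the
  decompositions of \<open>A\<close>. Peeling off the first block shows that this weight is
  \<open>(-1)\<^bsup>\<ell>(A)\<^esup> w(rev A)\<close>, because \<open>\<Sum>\<^sub>k (-1)\<^sup>k w(A\<^sub>1\<^sub>\<dots>\<^sub>k) w(rev (A\<^sub>k\<^sub>+\<^sub>1\<^sub>\<dots>))\<close> vanishes: only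
  the parity pattern of \<open>A\<close> matters, and the sum reduces to an alternating binomial sum.
  Reversing all decompositions turns the result into \<open>(-1)\<^bsup>\<ell>(\<alpha>)\<^esup> S\<^bsub>rev \<alpha>\<^esub>\<close>.
\<close>

section \<open>The antipode on the monomial basis\<close>

definition nonzeros :: "nat list \<Rightarrow> nat list" where
  "nonzeros u = filter (\<lambda>x. x \<noteq> 0) u"

lemma nonzeros_Cons_0 [simp]: "nonzeros (0 # u) = nonzeros u"
  by (simp add: nonzeros_def)

lemma nonzeros_Cons [simp]: "a \<noteq> 0 \<Longrightarrow> nonzeros (a # u) = a # nonzeros u"
  by (simp add: nonzeros_def)

fun splits :: "nat list \<Rightarrow> (nat list \<times> nat list) list" where
  "splits [] = [([], [])]"
| "splits (x # w) = concat (map (\<lambda>a. map (\<lambda>(u, v). (a # u, (x - a) # v)) (splits w)) [0..<Suc x])"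

text \<open>For a composition \<open>\<alpha>\<close>, \<open>rev_coarsenings \<gamma> \<alpha>\<close> is \<open>1\<close> if \<open>\<gamma>\<close> is a coarsening of
  \<open>rev \<alpha>\<close> and \<open>0\<close> otherwise: the first part of \<open>\<gamma>\<close> is the sum of a final block of \<open>\<alpha>\<close>.\<close>
fun rev_coarsenings :: "nat list \<Rightarrow> nat list \<Rightarrow> rat" where
  "rev_coarsenings [] \<alpha> = (if \<alpha> = [] then 1 else 0)"
| "rev_coarsenings (y # \<gamma>) \<alpha> =
     (\<Sum>j<length \<alpha>. if sum_list (drop j \<alpha>) = y then rev_coarsenings \<gamma> (take j \<alpha>) else 0)"

text \<open>The coefficient of \<open>(\<Sum>\<^sub>\<gamma> rev_coarsenings \<gamma> P \<cdot> M\<^sub>\<gamma>) \<cdot> M\<^sub>Q\<close> at a monomial with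
  exponent sequence \<open>w\<close> (see \<open>ps_mult_exponent_comp\<close> below).\<close>
definition prod_coeff :: "nat list \<Rightarrow> nat list \<Rightarrow> nat list \<Rightarrow> rat" where
  "prod_coeff P Q w =
     (\<Sum>(u, v)\<leftarrow>splits w. rev_coarsenings (nonzeros u) P * (if nonzeros v = Q then 1 else 0))"

lemma sum_list_sum_swap:
  "(\<Sum>x\<leftarrow>xs. \<Sum>a\<in>A. f x a) = (\<Sum>a\<in>A. \<Sum>x\<leftarrow>xs. f x a)"
  by (induction xs) (auto simp: sum.distrib)

lemma sum_list_if_mult:
  "(\<Sum>p\<leftarrow>xs. (if b then f p else 0) * (g p :: rat)) = (if b then (\<Sum>p\<leftarrow>xs. f p * g p) else 0)"
  by (induction xs) auto

lemma sum_list_map_concat: "(\<Sum>x\<leftarrow>concat xss. f x) = (\<Sum>xs\<leftarrow>xss. \<Sum>x\<leftarrow>xs. f x)"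
  by (induction xss) auto

lemma prod_coeff_Nil: "prod_coeff P Q [] = (if P = [] \<and> Q = [] then 1 else 0)"
  by (simp add: prod_coeff_def nonzeros_def)

lemma prod_coeff_Cons:
  "prod_coeff P Q (x # w) = (\<Sum>a\<in>{0..x}. \<Sum>(u, v)\<leftarrow>splits w.
     rev_coarsenings (nonzeros (a # u)) P * (if nonzeros ((x - a) # v) = Q then 1 else 0))"
  unfolding prod_coeff_def
  by (simp add: sum_list_map_concat comp_def case_prod_unfold interv_sum_list_conv_sum_set_nat
      atLeastLessThanSuc_atLeastAtMost del: upt_Suc)

lemma prod_coeff_Cons_0: "prod_coeff P Q (0 # w) = prod_coeff P Q w"
  by (simp add: prod_coeff_Cons prod_coeff_def case_prod_unfold comp_def)

lemma prod_coeff_Cons_pos: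
  assumes "0 < x"
  shows "prod_coeff P Q (x # w) =
      (if Q \<noteq> [] \<and> hd Q = x then prod_coeff P (tl Q) w else 0)
    + (\<Sum>j<length P. if sum_list (drop j P) = x then prod_coeff (take j P) Q w else 0)
    + (\<Sum>a\<in>{0<..<x}. \<Sum>j<length P. if sum_list (drop j P) = a \<and> Q \<noteq> [] \<and> hd Q = x - a
                                     then prod_coeff (take j P) (tl Q) w else 0)"
proof -
  define c where "c a = (\<Sum>(u, v)\<leftarrow>splits w.
    rev_coarsenings (nonzeros (a # u)) P * (if nonzeros ((x - a) # v) = Q then 1 else 0))" for a
  have "{0..x} = insert 0 (insert x {0<..<x})"
    using assms by auto
  then have "prod_coeff P Q (x # w) = c 0 + (c x + (\<Sum>a\<in>{0<..<x}. c a))"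
    unfolding prod_coeff_Cons c_def[symmetric] using assms by simp
  moreover have "c 0 = (if Q \<noteq> [] \<and> hd Q = x then prod_coeff P (tl Q) w else 0)"
    using assms by (cases Q) (auto simp: c_def prod_coeff_def case_prod_unfold)
  moreover have "c x = (\<Sum>j<length P. if sum_list (drop j P) = x then prod_coeff (take j P) Q w else 0)"
    using assms unfolding c_def prod_coeff_def case_prod_unfold
    by (simp add: sum_distrib_right sum_list_sum_swap sum_list_if_mult)
  moreover have "c a = (\<Sum>j<length P. if sum_list (drop j P) = a \<and> Q \<noteq> [] \<and> hd Q = x - a
                                     then prod_coeff (take j P) (tl Q) w else 0)"
    if "a \<in> {0<..<x}" for a
    using that by (cases Q) (auto simp: c_def prod_coeff_def case_prod_unfold sum_distrib_right
        sum_list_sum_swap sum_list_if_mult intro!: sum.cong)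
  ultimately show ?thesis
    by (simp add: add.assoc)
qed

lemma is_comp_take: "is_comp \<alpha> \<Longrightarrow> is_comp (take i \<alpha>)"
  by (auto simp: is_comp_def dest: in_set_takeD)

lemma is_comp_drop: "is_comp \<alpha> \<Longrightarrow> is_comp (drop i \<alpha>)"
  by (auto simp: is_comp_def dest: in_set_dropD)

lemma is_comp_sum_list_pos: "is_comp \<alpha> \<Longrightarrow> \<alpha> \<noteq> [] \<Longrightarrow> 0 < sum_list \<alpha>"
  by (cases \<alpha>) (auto simp: is_comp_def)

lemma sum_list_drop_take_pos:
  "is_comp \<alpha> \<Longrightarrow> j < i \<Longrightarrow> i \<le> length \<alpha> \<Longrightarrow> 0 < sum_list (drop j (take i \<alpha>))"
  by (rule is_comp_sum_list_pos) (auto intro: is_comp_drop is_comp_take)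

lemma sum_list_take_strict_mono:
  assumes "is_comp \<alpha>" "j < i" "i \<le> length \<alpha>"
  shows "sum_list (take j \<alpha>) < sum_list (take i \<alpha>)"
proof -
  have "sum_list (take i \<alpha>) = sum_list (take j \<alpha>) + sum_list (drop j (take i \<alpha>))"
    using assms(2) by (metis append_take_drop_id sum_list_append take_take min.strict_order_iff)
  with sum_list_drop_take_pos[OF assms] show ?thesis
    by simp
qed

lemma sum_if_eq_and:
  assumes "finite A"
  shows "(\<Sum>a\<in>A. if c = a \<and> R a then g else 0) = (if c \<in> A \<and> R c then g else 0)"
proof -
  have "(\<Sum>a\<in>A. if c = a \<and> R a then g else 0) = (\<Sum>a\<in>A. if c = a then (if R c then g else 0) else 0)"
    by (rule sum.cong) auto
  with assms show ?thesis
    by simp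
qed

text \<open>The terms of \<open>prod_coeff (take i \<alpha>) (drop i \<alpha>) (x # w)\<close> in which the exponent \<open>x\<close> is
  absorbed entirely by the last block of \<open>take i \<alpha>\<close>.\<close>
definition last_block_coeff :: "nat list \<Rightarrow> nat \<Rightarrow> nat list \<Rightarrow> nat \<Rightarrow> rat" where
  "last_block_coeff \<alpha> x w i =
     (\<Sum>j<i. if sum_list (drop j (take i \<alpha>)) = x then prod_coeff (take j \<alpha>) (drop i \<alpha>) w else 0)"

text \<open>The remaining terms, where \<open>x\<close> enters the first part \<open>\<alpha> ! i\<close> of \<open>M\<^bsub>drop i \<alpha>\<^esub>\<close> (alone or
  shared with the last block of \<open>take i \<alpha>\<close>), are those of the next cut in which \<open>x\<close> is absorbed
  by the last block of \<open>take (Suc i) \<alpha>\<close>; so the alternating sum over the cuts telescopes.\<close>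
lemma prod_coeff_cut_Cons_pos:
  assumes "is_comp \<alpha>" "0 < x" "i \<le> length \<alpha>"
  shows "prod_coeff (take i \<alpha>) (drop i \<alpha>) (x # w) =
    last_block_coeff \<alpha> x w i + (if i < length \<alpha> then last_block_coeff \<alpha> x w (Suc i) else 0)"
proof -
  note Cons_pos = prod_coeff_Cons_pos[OF assms(2), of "take i \<alpha>" "drop i \<alpha>" w]
  have last: "(\<Sum>j<length (take i \<alpha>). if sum_list (drop j (take i \<alpha>)) = x
      then prod_coeff (take j (take i \<alpha>)) (drop i \<alpha>) w else 0) = last_block_coeff \<alpha> x w i"
    using assms(3) by (auto simp: last_block_coeff_def min_absorb2 intro!: sum.cong)
  show ?thesis
  proof (cases "i < length \<alpha>")
    case False
    then show ?thesis
      using Cons_pos unfolding last by simp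
  next
    case True
    define s where "s j = sum_list (drop j (take i \<alpha>))" for j
    define c where "c j = prod_coeff (take j \<alpha>) (drop (Suc i) \<alpha>) w" for j
    have Q: "drop i \<alpha> \<noteq> []" "hd (drop i \<alpha>) = \<alpha> ! i" "tl (drop i \<alpha>) = drop (Suc i) \<alpha>"
      using True by (auto simp: hd_drop_conv_nth drop_Suc tl_drop)
    have "\<alpha> ! i > 0"
      using assms(1) True by (simp add: is_comp_def)
    then have split: "(0 < s j \<and> s j < x \<and> \<alpha> ! i = x - s j) \<longleftrightarrow> s j + \<alpha> ! i = x" if "j < i" for j
      using sum_list_drop_take_pos[OF assms(1) that assms(3)] by (auto simp: s_def)
    have first: "(if drop i \<alpha> \<noteq> [] \<and> hd (drop i \<alpha>) = x
        then prod_coeff (take i \<alpha>) (tl (drop i \<alpha>)) w else 0) = (if \<alpha> ! i = x then c i else 0)"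
      using Q by (simp add: c_def)
    have "(\<Sum>a\<in>{0<..<x}. \<Sum>j<length (take i \<alpha>).
          if sum_list (drop j (take i \<alpha>)) = a \<and> drop i \<alpha> \<noteq> [] \<and> hd (drop i \<alpha>) = x - a
          then prod_coeff (take j (take i \<alpha>)) (tl (drop i \<alpha>)) w else 0)
        = (\<Sum>j<i. \<Sum>a\<in>{0<..<x}. if s j = a \<and> \<alpha> ! i = x - a then c j else 0)"
      (is "?shared = _")
      using assms(3) Q by (subst sum.swap) (auto simp: s_def c_def intro!: sum.cong)
    also have "\<dots> = (\<Sum>j<i. if s j + \<alpha> ! i = x then c j else 0)"
      by (rule sum.cong) (auto simp: sum_if_eq_and split)
    finally have shared: "?shared = (\<Sum>j<i. if s j + \<alpha> ! i = x then c j else 0)" .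
    have "last_block_coeff \<alpha> x w (Suc i) = (if \<alpha> ! i = x then c i else 0)
        + (\<Sum>j<i. if s j + \<alpha> ! i = x then c j else 0)"
      using True unfolding last_block_coeff_def s_def c_def by (simp add: take_Suc_conv_app_nth)
    then show ?thesis
      using Cons_pos True unfolding last first shared by simp
  qed
qed

text \<open>With the claimed formula \<open>S(M\<^sub>\<beta>) = (-1)\<^bsup>\<ell>(\<beta>)\<^esup> \<Sum>\<^sub>\<gamma> rev_coarsenings \<gamma> \<beta> \<cdot> M\<^sub>\<gamma>\<close>,
  \<open>alt_cut_coeff \<alpha> w\<close> is a coefficient of \<open>\<Sum>\<^sub>i S(M\<^bsub>\<alpha>\<^sub>1\<^sub>\<dots>\<^sub>\<alpha>\<^sub>i\<^esub>) M\<^bsub>\<alpha>\<^sub>i\<^sub>+\<^sub>1\<^sub>\<dots>\<^sub>\<alpha>\<^sub>\<ell>\<^esub>\<close>,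
  which the defining recursion of the antipode requires to vanish.\<close>
definition alt_cut_coeff :: "nat list \<Rightarrow> nat list \<Rightarrow> rat" where
  "alt_cut_coeff \<alpha> w = (\<Sum>i\<le>length \<alpha>. (-1) ^ i * prod_coeff (take i \<alpha>) (drop i \<alpha>) w)"

lemma alternating_telescope:
  "(\<Sum>i\<le>n. (-1) ^ i * f i) + (\<Sum>i<n. (-1) ^ i * f (Suc i)) = (f 0 :: 'a :: comm_ring_1)"
  by (induction n) (auto simp: algebra_simps)

lemma alt_cut_coeff_Cons_pos:
  assumes "is_comp \<alpha>" "0 < x"
  shows "alt_cut_coeff \<alpha> (x # w) = 0"
proof -
  define n where "n = length \<alpha>"
  define f where "f = last_block_coeff \<alpha> x w"
  have "alt_cut_coeff \<alpha> (x # w) = (\<Sum>i\<le>n. (-1) ^ i * (f i + (if i < n then f (Suc i) else 0)))"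
    unfolding alt_cut_coeff_def n_def f_def
    by (rule sum.cong) (simp_all add: prod_coeff_cut_Cons_pos[OF assms])
  also have "\<dots> = (\<Sum>i\<le>n. (-1) ^ i * f i) + (\<Sum>i<n. (-1) ^ i * f (Suc i))"
    by (simp add: algebra_simps sum.distrib lessThan_Suc_atMost[symmetric])
  also have "\<dots> = f 0"
    by (rule alternating_telescope)
  finally show ?thesis
    by (simp add: f_def last_block_coeff_def)
qed

lemma alt_cut_coeff_eq_0:
  assumes "is_comp \<alpha>" "\<alpha> \<noteq> []"
  shows "alt_cut_coeff \<alpha> w = 0"
proof (induction w)
  case Nil
  show ?case
    using assms(2) by (auto simp: alt_cut_coeff_def prod_coeff_Nil intro!: sum.neutral)
next
  case (Cons x w)
  then show ?case
    using alt_cut_coeff_Cons_pos[OF assms(1)]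
    by (cases "x = 0") (simp_all add: alt_cut_coeff_def prod_coeff_Cons_0)
qed

lemma prod_coeff_Nil_right: "prod_coeff P [] w = rev_coarsenings (nonzeros w) P"
proof (induction w arbitrary: P)
  case Nil
  show ?case
    by (simp add: prod_coeff_Nil nonzeros_def)
next
  case (Cons x w)
  then show ?case
    by (cases "x = 0") (simp_all add: prod_coeff_Cons_0 prod_coeff_Cons_pos cong: if_cong)
qed

definition exponent_comp :: "(nat \<Rightarrow>\<^sub>0 nat) \<Rightarrow> nat list" where
  "exponent_comp e = map (Poly_Mapping.lookup e) (sorted_list_of_set (Poly_Mapping.keys e))"

lemma monoM_eq: "monoM \<beta> e = (if exponent_comp e = \<beta> then 1 else 0)"
  by (simp add: monoM_def exponent_comp_def)

lemma exponent_comp_eq_Nil_iff: "exponent_comp e = [] \<longleftrightarrow> e = 0"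
  by (auto simp: exponent_comp_def)

lemma nonzeros_exponent_comp: "nonzeros (exponent_comp e) = exponent_comp e"
  by (auto simp: nonzeros_def exponent_comp_def filter_id_conv in_keys_iff)

lemma exponent_comp_eq_nonzeros:
  assumes "sorted K" "distinct K" "Poly_Mapping.keys f \<subseteq> set K"
  shows "exponent_comp f = nonzeros (map (Poly_Mapping.lookup f) K)"
proof -
  have "sorted (filter (\<lambda>k. k \<in> Poly_Mapping.keys f) K)"
    "distinct (filter (\<lambda>k. k \<in> Poly_Mapping.keys f) K)"
    using assms(1,2) by (simp_all add: sorted_wrt_filter)
  note sorted_list_of_set.idem_if_sorted_distinct[OF this]
  moreover have "set (filter (\<lambda>k. k \<in> Poly_Mapping.keys f) K) = Poly_Mapping.keys f"
    using assms(3) by auto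
  ultimately show ?thesis
    by (simp add: exponent_comp_def nonzeros_def filter_map comp_def in_keys_iff)
qed

lemma set_splits:
  "set (splits w) =
     {(u, v). length u = length w \<and> length v = length w \<and> (\<forall>j<length w. u ! j + v ! j = w ! j)}"
proof (induction w)
  case Nil
  then show ?case
    by auto
next
  case (Cons x w)
  show ?case
  proof (intro set_eqI iffI)
    fix p
    assume "p \<in> set (splits (x # w))"
    then show "p \<in> {(u, v). length u = length (x # w) \<and> length v = length (x # w)
                             \<and> (\<forall>j<length (x # w). u ! j + v ! j = (x # w) ! j)}"
      using Cons.IH by (auto simp: All_less_Suc2)
  next
    fix p
    assume "p \<in> {(u, v). length u = length (x # w) \<and> length v = length (x # w)
                          \<and> (\<forall>j<length (x # w). u ! j + v ! j = (x # w) ! j)}"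
    then obtain u v where p: "p = (u, v)" "length u = Suc (length w)" "length v = Suc (length w)"
        "\<forall>j<Suc (length w). u ! j + v ! j = (x # w) ! j"
      by auto
    then obtain a u' b v' where uv: "u = a # u'" "v = b # v'"
      by (metis length_Suc_conv)
    have "a + b = x"
      using p(4) uv by (metis nth_Cons_0 zero_less_Suc)
    moreover have "(u', v') \<in> set (splits w)"
      using p uv Cons.IH by (auto simp: All_less_Suc2)
    ultimately show "p \<in> set (splits (x # w))"
      using p(1) uv by (auto intro!: bexI[of _ "(u', v')"] bexI[of _ a] simp: image_iff)
  qed
qed

lemma distinct_splits: "distinct (splits w)"
proof (induction w)
  case Nil
  then show ?case
    by simp
next
  case (Cons x w)
  define f where "f = (\<lambda>a. map (\<lambda>(u, v). (a # u, (x - a) # v)) (splits w))"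
  have "splits w \<noteq> []"
    by (induction w) auto
  then have "inj_on f {0..<Suc x}"
    by (intro inj_onI) (auto simp: f_def neq_Nil_conv)
  then have "distinct (map f [0..<Suc x])"
    by (simp add: distinct_map del: upt_Suc)
  moreover have "distinct (f a)" for a
    using Cons.IH by (auto simp: f_def distinct_map inj_on_def)
  moreover have "set (f a) \<inter> set (f b) = {}" if "f a \<noteq> f b" for a b
    using that by (auto simp: f_def)
  ultimately have "distinct (concat (map f [0..<Suc x]))"
    by (intro distinct_concat) auto
  then show ?case
    by (simp only: f_def splits.simps)
qed

definition monomial_on :: "nat list \<Rightarrow> nat list \<Rightarrow> (nat \<Rightarrow>\<^sub>0 nat)" where
  "monomial_on K u = (\<Sum>j<length K. Poly_Mapping.single (K ! j) (u ! j))"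

lemma lookup_monomial_on_nth:
  assumes "distinct K" "i < length K"
  shows "Poly_Mapping.lookup (monomial_on K u) (K ! i) = u ! i"
proof -
  have "Poly_Mapping.lookup (monomial_on K u) (K ! i) = (\<Sum>j<length K. if j = i then u ! i else 0)"
    unfolding monomial_on_def lookup_sum lookup_single when_def
    using assms by (intro sum.cong) (auto simp: nth_eq_iff_index_eq)
  with assms(2) show ?thesis
    by simp
qed

lemma lookup_monomial_on_notin: "k \<notin> set K \<Longrightarrow> Poly_Mapping.lookup (monomial_on K u) k = 0"
  unfolding monomial_on_def lookup_sum lookup_single when_def by (auto intro: sum.neutral)

lemma map_lookup_monomial_on:
  "distinct K \<Longrightarrow> length u = length K \<Longrightarrow> map (Poly_Mapping.lookup (monomial_on K u)) K = u"
  by (intro nth_equalityI) (simp_all add: lookup_monomial_on_nth)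

lemma monomial_on_eqI:
  assumes "distinct K" "length u = length K" "\<And>i. i < length K \<Longrightarrow> u ! i = Poly_Mapping.lookup f (K ! i)"
    and "Poly_Mapping.keys f \<subseteq> set K"
  shows "monomial_on K u = f"
proof (rule poly_mapping_eqI)
  fix k
  show "Poly_Mapping.lookup (monomial_on K u) k = Poly_Mapping.lookup f k"
  proof (cases "k \<in> set K")
    case True
    then obtain i where "i < length K" "k = K ! i"
      by (auto simp: in_set_conv_nth)
    with assms show ?thesis
      by (simp add: lookup_monomial_on_nth)
  next
    case False
    with assms(4) show ?thesis
      by (auto simp: lookup_monomial_on_notin in_keys_iff)
  qed
qed

lemma monomial_on_add_eq:
  fixes K :: "nat list"
  assumes "distinct K" "Poly_Mapping.keys e = set K"
    and "(u, v) \<in> set (splits (map (Poly_Mapping.lookup e) K))"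
  shows "monomial_on K u + monomial_on K v = e"
proof (rule poly_mapping_eqI)
  fix k
  show "Poly_Mapping.lookup (monomial_on K u + monomial_on K v) k = Poly_Mapping.lookup e k"
  proof (cases "k \<in> set K")
    case True
    then obtain i where "i < length K" "k = K ! i"
      by (auto simp: in_set_conv_nth)
    with assms(1,3) show ?thesis
      by (simp add: set_splits lookup_add lookup_monomial_on_nth)
  next
    case False
    then have "k \<notin> Poly_Mapping.keys e"
      using assms(2) by simp
    with False show ?thesis
      by (simp add: lookup_add lookup_monomial_on_notin in_keys_iff)
  qed
qed

lemma keys_add_nat:
  "Poly_Mapping.keys (f + g) = Poly_Mapping.keys f \<union> Poly_Mapping.keys (g :: 'a \<Rightarrow>\<^sub>0 nat)"
  by (auto simp: in_keys_iff lookup_add)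

lemma bij_betw_splits:
  fixes K :: "nat list"
  assumes "distinct K" "Poly_Mapping.keys e = set K"
  shows "bij_betw (\<lambda>(f, g). (map (Poly_Mapping.lookup f) K, map (Poly_Mapping.lookup g) K))
           {(f, g). f + g = e} (set (splits (map (Poly_Mapping.lookup e) K)))"
proof (rule bij_betw_byWitness[where f' = "\<lambda>(u, v). (monomial_on K u, monomial_on K v)"])
  show "\<forall>q\<in>set (splits (map (Poly_Mapping.lookup e) K)).
      (\<lambda>(f, g). (map (Poly_Mapping.lookup f) K, map (Poly_Mapping.lookup g) K))
      ((\<lambda>(u, v). (monomial_on K u, monomial_on K v)) q) = q"
  proof
    fix q
    assume "q \<in> set (splits (map (Poly_Mapping.lookup e) K))"
    then obtain u v where "q = (u, v)" "length u = length K" "length v = length K"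
      unfolding set_splits by auto
    with assms(1) show "(\<lambda>(f, g). (map (Poly_Mapping.lookup f) K, map (Poly_Mapping.lookup g) K))
        ((\<lambda>(u, v). (monomial_on K u, monomial_on K v)) q) = q"
      by (simp add: map_lookup_monomial_on)
  qed
  have "Poly_Mapping.keys f \<subseteq> set K \<and> Poly_Mapping.keys g \<subseteq> set K" if "f + g = e" for f g
    using that assms(2) keys_add_nat[of f g] by auto
  with assms(1) show "\<forall>p\<in>{(f, g). f + g = e}. (\<lambda>(u, v). (monomial_on K u, monomial_on K v))
      ((\<lambda>(f, g). (map (Poly_Mapping.lookup f) K, map (Poly_Mapping.lookup g) K)) p) = p"
    by (auto intro!: monomial_on_eqI)
  show "(\<lambda>(f, g). (map (Poly_Mapping.lookup f) K, map (Poly_Mapping.lookup g) K)) ` {(f, g). f + g = e}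
      \<subseteq> set (splits (map (Poly_Mapping.lookup e) K))"
    by (auto simp: set_splits lookup_add)
  have "monomial_on K u + monomial_on K v = e"
    if "(u, v) \<in> set (splits (map (Poly_Mapping.lookup e) K))" for u v
    using assms that by (rule monomial_on_add_eq)
  then show "(\<lambda>(u, v). (monomial_on K u, monomial_on K v)) ` set (splits (map (Poly_Mapping.lookup e) K))
      \<subseteq> {(f, g). f + g = e}"
    by auto
qed

lemma ps_mult_exponent_comp:
  "ps_mult (\<lambda>e. F (exponent_comp e)) (\<lambda>e. G (exponent_comp e)) e
     = (\<Sum>(u, v)\<leftarrow>splits (exponent_comp e). F (nonzeros u) * G (nonzeros v))"
proof -
  define K where "K = sorted_list_of_set (Poly_Mapping.keys e)"
  have K: "sorted K" "distinct K" "Poly_Mapping.keys e = set K"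
    by (simp_all add: K_def)
  define h where "h = (\<lambda>(u, v). F (nonzeros u) * G (nonzeros v))"
  have "ps_mult (\<lambda>e. F (exponent_comp e)) (\<lambda>e. G (exponent_comp e)) e
      = (\<Sum>(f, g)\<in>{(f, g). f + g = e}. F (exponent_comp f) * G (exponent_comp g))"
    by (simp add: ps_mult_def case_prod_unfold)
  also have "\<dots> = (\<Sum>(f, g)\<in>{(f, g). f + g = e}.
      h (map (Poly_Mapping.lookup f) K, map (Poly_Mapping.lookup g) K))"
  proof -
    have "F (exponent_comp f) * G (exponent_comp g)
        = h (map (Poly_Mapping.lookup f) K, map (Poly_Mapping.lookup g) K)" if "f + g = e" for f g
    proof -
      have "Poly_Mapping.keys f \<subseteq> set K" "Poly_Mapping.keys g \<subseteq> set K"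
        using that K(3) keys_add_nat[of f g] by auto
      with K(1,2) show ?thesis
        by (simp add: h_def exponent_comp_eq_nonzeros)
    qed
    then show ?thesis
      by (intro sum.cong) auto
  qed
  also have "\<dots> = (\<Sum>q\<in>set (splits (exponent_comp e)). h q)"
    using sum.reindex_bij_betw[OF bij_betw_splits[OF K(2,3)], of h]
    by (simp add: exponent_comp_def K_def case_prod_unfold)
  also have "\<dots> = (\<Sum>q\<leftarrow>splits (exponent_comp e). h q)"
    by (simp add: sum_list_distinct_conv_sum_set distinct_splits)
  finally show ?thesis
    by (simp add: h_def)
qed

lemma rev_coarsenings_Nil_right: "rev_coarsenings \<gamma> [] = (if \<gamma> = [] then 1 else 0)"
  by (cases \<gamma>) auto

lemma foldr_ps_add: "foldr ps_add fs ps_zero e = (\<Sum>f\<leftarrow>fs. f e)"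
  by (induction fs) (auto simp: ps_add_def ps_zero_def)

declare antipodeM.simps [simp del]

theorem antipodeM_eq:
  "is_comp \<alpha> \<Longrightarrow> antipodeM \<alpha> e = (-1) ^ length \<alpha> * rev_coarsenings (exponent_comp e) \<alpha>"
proof (induction \<alpha> arbitrary: e rule: measure_induct_rule[of length])
  case (less \<alpha>)
  show ?case
  proof (cases "\<alpha> = []")
    case True
    then show ?thesis
      by (simp add: antipodeM.simps ps_one_def rev_coarsenings_Nil_right exponent_comp_eq_Nil_iff)
  next
    case False
    have "ps_mult (antipodeM (take i \<alpha>)) (monoM (drop i \<alpha>)) e
        = (-1) ^ i * prod_coeff (take i \<alpha>) (drop i \<alpha>) (exponent_comp e)"
      if "i < length \<alpha>" for i
    proof -
      have "antipodeM (take i \<alpha>) = (\<lambda>e. (-1) ^ i * rev_coarsenings (exponent_comp e) (take i \<alpha>))"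
        using less.IH[of "take i \<alpha>"] less.prems that by (simp add: is_comp_take fun_eq_iff)
      then show ?thesis
        using ps_mult_exponent_comp[of "\<lambda>\<gamma>. (-1) ^ i * rev_coarsenings \<gamma> (take i \<alpha>)"
            "\<lambda>\<gamma>. if \<gamma> = drop i \<alpha> then 1 else 0" e]
        by (simp add: monoM_eq[abs_def] prod_coeff_def case_prod_unfold sum_list_const_mult mult.assoc)
    qed
    then have "antipodeM \<alpha> e
        = - (\<Sum>i<length \<alpha>. (-1) ^ i * prod_coeff (take i \<alpha>) (drop i \<alpha>) (exponent_comp e))"
      using False by (simp add: antipodeM.simps[of \<alpha>] ps_neg_def foldr_ps_add
          interv_sum_list_conv_sum_set_nat atLeast0LessThan del: upt_Suc)
    also have "\<dots> = (-1) ^ length \<alpha> * prod_coeff \<alpha> [] (exponent_comp e)"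
      using alt_cut_coeff_eq_0[OF less.prems False, of "exponent_comp e"]
      by (simp add: alt_cut_coeff_def flip: lessThan_Suc_atMost)
    finally show ?thesis
      by (simp add: prod_coeff_Nil_right nonzeros_exponent_comp)
  qed
qed

section \<open>Decompositions into blocks\<close>

definition decomps :: "'a list \<Rightarrow> 'a list list set" where
  "decomps \<alpha> = {Bs. concat Bs = \<alpha> \<and> (\<forall>B\<in>set Bs. B \<noteq> [])}"

lemma decomps_Nil: "decomps [] = {[]}"
  by (auto simp: decomps_def)

lemma length_le_length_concat: "\<forall>B\<in>set Bs. B \<noteq> [] \<Longrightarrow> length Bs \<le> length (concat Bs)"
proof (induction Bs)
  case (Cons B Bs)
  then show ?case
    by (cases B) auto
qed simp

lemma finite_decomps: "finite (decomps \<alpha>)"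
proof (rule finite_subset)
  let ?blocks = "{B. set B \<subseteq> set \<alpha> \<and> length B \<le> length \<alpha>}"
  show "decomps \<alpha> \<subseteq> {Bs. set Bs \<subseteq> ?blocks \<and> length Bs \<le> length \<alpha>}"
    using length_le_length_concat by (fastforce simp: decomps_def length_concat member_le_sum_list)
  show "finite {Bs. set Bs \<subseteq> ?blocks \<and> length Bs \<le> length \<alpha>}"
    by (intro finite_lists_length_le finite_lists_length_le) simp
qed

lemma concat_take_drop_decomp:
  fixes Bs :: "'a list list" and j :: nat
  assumes "concat Bs = \<alpha>"
  defines "k \<equiv> length (concat (take j Bs))"
  shows "k \<le> length \<alpha>" "take k \<alpha> = concat (take j Bs)" "drop k \<alpha> = concat (drop j Bs)"
proof -
  have "concat (take j Bs) @ concat (drop j Bs) = \<alpha>"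
    using assms(1) by (metis append_take_drop_id concat_append)
  then show "k \<le> length \<alpha>" "take k \<alpha> = concat (take j Bs)" "drop k \<alpha> = concat (drop j Bs)"
    unfolding k_def by auto
qed

lemma bij_betw_decomps_cut:
  "bij_betw (\<lambda>(Bs, j). (length (concat (take j Bs)), take j Bs, drop j Bs))
     (SIGMA Bs:decomps \<alpha>. {..length Bs})
     (SIGMA k:{..length \<alpha>}. decomps (take k \<alpha>) \<times> decomps (drop k \<alpha>))"
proof (rule bij_betw_byWitness[where f' = "\<lambda>(k, X, Y). (X @ Y, length X)"])
  show "\<forall>p\<in>SIGMA Bs:decomps \<alpha>. {..length Bs}.
      (\<lambda>(k, X, Y). (X @ Y, length X))
        ((\<lambda>(Bs, j). (length (concat (take j Bs)), take j Bs, drop j Bs)) p) = p"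
    by (auto simp: min_absorb2)
  show "\<forall>q\<in>SIGMA k:{..length \<alpha>}. decomps (take k \<alpha>) \<times> decomps (drop k \<alpha>).
      (\<lambda>(Bs, j). (length (concat (take j Bs)), take j Bs, drop j Bs))
        ((\<lambda>(k, X, Y). (X @ Y, length X)) q) = q"
    by (auto simp: decomps_def min_absorb2)
  have "(length (concat (take j Bs)), take j Bs, drop j Bs)
      \<in> (SIGMA k:{..length \<alpha>}. decomps (take k \<alpha>) \<times> decomps (drop k \<alpha>))"
    if "Bs \<in> decomps \<alpha>" for Bs j
  proof -
    have "concat Bs = \<alpha>" "\<forall>B\<in>set (take j Bs). B \<noteq> []" "\<forall>B\<in>set (drop j Bs). B \<noteq> []"
      using that by (auto simp: decomps_def dest: in_set_takeD in_set_dropD)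
    with concat_take_drop_decomp[of Bs \<alpha> j] show ?thesis
      by (simp add: decomps_def)
  qed
  then show "(\<lambda>(Bs, j). (length (concat (take j Bs)), take j Bs, drop j Bs))
      ` (SIGMA Bs:decomps \<alpha>. {..length Bs})
      \<subseteq> (SIGMA k:{..length \<alpha>}. decomps (take k \<alpha>) \<times> decomps (drop k \<alpha>))"
    by auto
  show "(\<lambda>(k, X, Y). (X @ Y, length X))
      ` (SIGMA k:{..length \<alpha>}. decomps (take k \<alpha>) \<times> decomps (drop k \<alpha>))
      \<subseteq> (SIGMA Bs:decomps \<alpha>. {..length Bs})"
    by (auto simp: decomps_def)
qed

lemma sum_decomps_cut:
  "(\<Sum>Bs\<in>decomps \<alpha>. \<Sum>j\<le>length Bs. g (take j Bs) (drop j Bs))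
   = (\<Sum>k\<le>length \<alpha>. \<Sum>X\<in>decomps (take k \<alpha>). \<Sum>Y\<in>decomps (drop k \<alpha>). g X Y)"
proof -
  have "(\<Sum>Bs\<in>decomps \<alpha>. \<Sum>j\<le>length Bs. g (take j Bs) (drop j Bs))
      = (\<Sum>(Bs, j)\<in>(SIGMA Bs:decomps \<alpha>. {..length Bs}). g (take j Bs) (drop j Bs))"
    by (rule sum.Sigma) (auto simp: finite_decomps)
  also have "\<dots> = (\<Sum>(k, X, Y)\<in>(SIGMA k:{..length \<alpha>}. decomps (take k \<alpha>) \<times> decomps (drop k \<alpha>)). g X Y)"
    using sum.reindex_bij_betw[OF bij_betw_decomps_cut, of "\<lambda>(k, X, Y). g X Y"]
    by (simp add: case_prod_beta)
  also have "\<dots> = (\<Sum>k\<le>length \<alpha>. \<Sum>(X, Y)\<in>decomps (take k \<alpha>) \<times> decomps (drop k \<alpha>). g X Y)"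
    by (rule sum.Sigma[symmetric]) (auto simp: finite_decomps)
  also have "\<dots> = (\<Sum>k\<le>length \<alpha>. \<Sum>X\<in>decomps (take k \<alpha>). \<Sum>Y\<in>decomps (drop k \<alpha>). g X Y)"
    by (simp add: sum.cartesian_product)
  finally show ?thesis .
qed

lemma sum_decomps_length_1:
  "(\<Sum>Y\<in>decomps D. if length Y = 1 then f Y else 0) = (if D \<noteq> [] then f [D] else 0)"
proof -
  have "length Y = 1 \<longleftrightarrow> Y = [D]" if "Y \<in> decomps D" for Y
    using that by (auto simp: decomps_def length_Suc_conv)
  then have "(\<Sum>Y\<in>decomps D. if length Y = 1 then f Y else 0)
      = (\<Sum>Y\<in>decomps D. if Y = [D] then f [D] else 0)"
    by (intro sum.cong) auto
  also have "\<dots> = (if D \<noteq> [] then f [D] else 0)"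
    by (simp add: sum.delta' finite_decomps) (simp add: decomps_def)
  finally show ?thesis .
qed

definition block_sum :: "('a list \<Rightarrow> 'b :: comm_semiring_1) \<Rightarrow> 'a list \<Rightarrow> 'b" where
  "block_sum h A = (\<Sum>Bs\<in>decomps A. prod_list (map h Bs))"

lemma block_sum_Nil: "block_sum h [] = 1"
  by (simp add: block_sum_def decomps_Nil)

lemma block_sum_first_block:
  assumes "A \<noteq> []"
  shows "block_sum h A = (\<Sum>k\<in>{1..length A}. h (take k A) * block_sum h (drop k A))"
proof -
  define g where "g X Y = (if length X = 1 then prod_list (map h X) * prod_list (map h Y) else 0)"
    for X Y
  have "(\<Sum>j\<le>length Bs. g (take j Bs) (drop j Bs)) = prod_list (map h Bs)" if "Bs \<in> decomps A" for Bs
  proof -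
    have "Bs \<noteq> []"
      using that assms by (auto simp: decomps_def)
    moreover have "g (take j Bs) (drop j Bs) = (if j = 1 then prod_list (map h Bs) else 0)"
      if "j \<le> length Bs" for j
      using that by (auto simp: g_def simp flip: prod_list.append map_append)
    ultimately show ?thesis
      by (simp add: Suc_le_eq)
  qed
  then have "block_sum h A = (\<Sum>Bs\<in>decomps A. \<Sum>j\<le>length Bs. g (take j Bs) (drop j Bs))"
    by (simp add: block_sum_def)
  also have "\<dots> = (\<Sum>k\<le>length A. \<Sum>X\<in>decomps (take k A). \<Sum>Y\<in>decomps (drop k A). g X Y)"
    by (rule sum_decomps_cut)
  also have "\<dots> = (\<Sum>k\<le>length A. if k \<noteq> 0 then h (take k A) * block_sum h (drop k A) else 0)"
  proof (rule sum.cong[OF refl])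
    fix k
    have "(\<Sum>X\<in>decomps (take k A). \<Sum>Y\<in>decomps (drop k A). g X Y)
        = (\<Sum>X\<in>decomps (take k A).
            if length X = 1 then prod_list (map h X) * block_sum h (drop k A) else 0)"
      unfolding g_def block_sum_def by (intro sum.cong) (simp_all add: sum_distrib_left)
    also have "\<dots> = (if take k A \<noteq> [] then h (take k A) * block_sum h (drop k A) else 0)"
      by (subst sum_decomps_length_1) simp
    finally show "(\<Sum>X\<in>decomps (take k A). \<Sum>Y\<in>decomps (drop k A). g X Y)
        = (if k \<noteq> 0 then h (take k A) * block_sum h (drop k A) else 0)"
      using assms by simp
  qed
  also have "\<dots> = (\<Sum>k\<in>{1..length A}. h (take k A) * block_sum h (drop k A))"
    by (rule sum.mono_neutral_cong_right) auto
  finally show ?thesis .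
qed

lemma sum_list_concat: "sum_list (concat xss) = sum_list (map sum_list xss)"
  by (induction xss) auto

lemma prod_rev_coarsenings_Cons:
  "prod_list (map h Bs) * rev_coarsenings (y # \<gamma>) (map sum_list Bs)
   = (\<Sum>j\<le>length Bs. if drop j Bs \<noteq> [] \<and> sum_list (concat (drop j Bs)) = y
        then prod_list (map h (take j Bs)) * rev_coarsenings \<gamma> (map sum_list (take j Bs))
             * prod_list (map h (drop j Bs))
        else 0)"
proof -
  have "prod_list (map h Bs) = prod_list (map h (take j Bs)) * prod_list (map h (drop j Bs))" for j
    by (simp flip: prod_list.append map_append)
  then have "(\<Sum>j\<le>length Bs. if drop j Bs \<noteq> [] \<and> sum_list (concat (drop j Bs)) = y
        then prod_list (map h (take j Bs)) * rev_coarsenings \<gamma> (map sum_list (take j Bs))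
             * prod_list (map h (drop j Bs))
        else 0)
      = (\<Sum>j<length Bs. prod_list (map h Bs) * (if sum_list (drop j (map sum_list Bs)) = y
          then rev_coarsenings \<gamma> (take j (map sum_list Bs)) else 0))"
    by (simp add: lessThan_Suc_atMost[symmetric]) (auto simp: sum_list_concat drop_map take_map mult_ac
        intro!: sum.cong)
  then show ?thesis
    by (simp add: sum_distrib_left)
qed

lemma indicator_rev_sums_Cons:
  fixes G :: "nat list \<Rightarrow> 'b :: comm_semiring_1"
  shows "(if rev (map sum_list As) = y # \<gamma> then 1 else 0) * prod_list (map G As)
   = (\<Sum>j\<le>length As. if drop j As \<noteq> [] \<and> sum_list (concat (drop j As)) = y
        then (if rev (map sum_list (take j As)) = \<gamma> then 1 else 0) * prod_list (map G (take j As))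
             * (if length (drop j As) = 1 then prod_list (map G (drop j As)) else 0)
        else 0)"
  (is "_ = (\<Sum>j\<le>length As. ?t j)")
proof (cases As rule: rev_exhaust)
  case Nil
  then show ?thesis
    by simp
next
  case (snoc Xs A)
  have "?t j = (if j = length Xs then ?t (length Xs) else 0)" for j
    using snoc by auto
  then have "(\<Sum>j\<le>length As. ?t j) = (\<Sum>j\<le>length As. if j = length Xs then ?t (length Xs) else 0)"
    by (rule sum.cong[OF refl])
  also have "\<dots> = ?t (length Xs)"
    using snoc by (simp only: sum.delta finite_atMost) simp
  finally show ?thesis
    using snoc by simp
qed

lemma sum_decomps_cut_last_block:
  fixes F H :: "'a :: monoid_add list list \<Rightarrow> 'b :: comm_semiring_1"
  shows "(\<Sum>Bs\<in>decomps \<alpha>. \<Sum>j\<le>length Bs.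
            if drop j Bs \<noteq> [] \<and> sum_list (concat (drop j Bs)) = y
            then F (take j Bs) * H (drop j Bs) else 0)
       = (\<Sum>k<length \<alpha>. if sum_list (drop k \<alpha>) = y
            then (\<Sum>X\<in>decomps (take k \<alpha>). F X) * (\<Sum>Y\<in>decomps (drop k \<alpha>). H Y) else 0)"
proof -
  define g where "g X Y = (if Y \<noteq> [] \<and> sum_list (concat Y) = y then F X * H Y else 0)" for X Y
  have "(\<Sum>X\<in>decomps (take k \<alpha>). \<Sum>Y\<in>decomps (drop k \<alpha>). g X Y)
      = (if k < length \<alpha> \<and> sum_list (drop k \<alpha>) = y
            then (\<Sum>X\<in>decomps (take k \<alpha>). F X) * (\<Sum>Y\<in>decomps (drop k \<alpha>). H Y) else 0)" for k
  proof -
    have cond: "(Y \<noteq> [] \<and> sum_list (concat Y) = y) \<longleftrightarrow> k < length \<alpha> \<and> sum_list (drop k \<alpha>) = y"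
      if "Y \<in> decomps (drop k \<alpha>)" for Y
    proof -
      have "concat Y = drop k \<alpha>" "\<forall>B\<in>set Y. B \<noteq> []"
        using that by (auto simp: decomps_def)
      moreover from this have "Y \<noteq> [] \<longleftrightarrow> drop k \<alpha> \<noteq> []"
        by (cases Y) auto
      ultimately show ?thesis
        by auto
    qed
    show ?thesis
    proof (cases "k < length \<alpha> \<and> sum_list (drop k \<alpha>) = y")
      case True
      with cond show ?thesis
        by (simp add: g_def sum_product cong: sum.cong)
    next
      case False
      then have "g X Y = 0" if "Y \<in> decomps (drop k \<alpha>)" for X Y
        using cond[OF that] by (auto simp: g_def)
      then have "(\<Sum>X\<in>decomps (take k \<alpha>). \<Sum>Y\<in>decomps (drop k \<alpha>). g X Y) = 0"
        by simp
      with False show ?thesis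
        by (simp only: if_False)
    qed
  qed
  then show ?thesis
    unfolding g_def[symmetric] sum_decomps_cut by (simp add: lessThan_Suc_atMost[symmetric])
qed

lemma sum_decomps_rev_coarsenings_Cons:
  "(\<Sum>Bs\<in>decomps \<alpha>. prod_list (map h Bs) * rev_coarsenings (y # \<gamma>) (map sum_list Bs))
   = (\<Sum>k<length \<alpha>. if sum_list (drop k \<alpha>) = y
        then (\<Sum>X\<in>decomps (take k \<alpha>). prod_list (map h X) * rev_coarsenings \<gamma> (map sum_list X))
             * block_sum h (drop k \<alpha>)
        else 0)"
  unfolding prod_rev_coarsenings_Cons block_sum_def
  by (rule sum_decomps_cut_last_block[where
        F = "\<lambda>X. prod_list (map h X) * rev_coarsenings \<gamma> (map sum_list X)" and
        H = "\<lambda>Y. prod_list (map h Y)"])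

lemma sum_decomps_rev_sums_Cons:
  fixes G :: "nat list \<Rightarrow> 'b :: comm_semiring_1"
  shows "(\<Sum>As\<in>decomps \<alpha>. (if rev (map sum_list As) = y # \<gamma> then 1 else 0) * prod_list (map G As))
   = (\<Sum>k<length \<alpha>. if sum_list (drop k \<alpha>) = y
        then (\<Sum>X\<in>decomps (take k \<alpha>). (if rev (map sum_list X) = \<gamma> then 1 else 0) * prod_list (map G X))
             * G (drop k \<alpha>)
        else 0)"
proof -
  have "(\<Sum>Y\<in>decomps (drop k \<alpha>). if length Y = 1 then prod_list (map G Y) else 0) = G (drop k \<alpha>)"
    if "k < length \<alpha>" for k
    using that by (simp only: sum_decomps_length_1) simp
  then show ?thesis
    unfolding indicator_rev_sums_Cons
      sum_decomps_cut_last_block[where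
        F = "\<lambda>X. (if rev (map sum_list X) = \<gamma> then 1 else 0) * prod_list (map G X)" and
        H = "\<lambda>Y. if length Y = 1 then prod_list (map G Y) else 0"]
    by (intro sum.cong) simp_all
qed

text \<open>Both sides enumerate a decomposition of \<open>\<alpha>\<close> into blocks together with a grouping of
  consecutive blocks into superblocks whose sums, read backwards, are \<open>\<gamma>\<close>.\<close>
lemma sum_decomps_regroup:
  "(\<Sum>Bs\<in>decomps \<alpha>. prod_list (map h Bs) * rev_coarsenings \<gamma> (map sum_list Bs))
   = (\<Sum>As\<in>decomps \<alpha>. (if rev (map sum_list As) = \<gamma> then 1 else 0) * prod_list (map (block_sum h) As))"
proof (induction \<gamma> arbitrary: \<alpha>)
  case Nil
  then show ?case
    by (intro sum.cong) auto
next
  case (Cons y \<gamma>)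
  then show ?case
    by (simp only: sum_decomps_rev_coarsenings_Cons sum_decomps_rev_sums_Cons)
qed

section \<open>An alternating identity for sorted Boolean words\<close>

lemma sum_alternating_inverse_fact:
  assumes "0 < t"
  shows "(\<Sum>q\<le>t. (-1) ^ q / (fact q * fact (t - q)) :: 'a :: field_char_0) = 0"
proof -
  have "(\<Sum>q\<le>t. (-1) ^ q / (fact q * fact (t - q)) :: 'a)
      = (\<Sum>q\<le>t. (-1) ^ q * of_nat (t choose q)) / fact t"
    by (simp add: sum_divide_distrib binomial_fact)
  also have "\<dots> = 0"
    using choose_alternating_sum[OF assms] by simp
  finally show ?thesis .
qed

definition sorted_weight :: "bool list \<Rightarrow> rat" where
  "sorted_weight P =
     (if sorted P then 1 / (fact (length (filter id P)) * fact (length (filter Not P))) else 0)"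

lemma sorted_weight_replicate:
  "sorted_weight (replicate a False @ replicate b True) = 1 / (fact a * fact b)"
  by (simp add: sorted_weight_def sorted_append)

lemma sorted_bool_list_eq_replicate:
  "sorted (P :: bool list) \<Longrightarrow> \<exists>a b. P = replicate a False @ replicate b True"
proof (induction P)
  case Nil
  have "[] = replicate 0 False @ replicate 0 True"
    by simp
  then show ?case
    by blast
next
  case (Cons x P)
  then obtain a b where P: "P = replicate a False @ replicate b True"
    by auto
  show ?case
  proof (cases x)
    case False
    with P have "x # P = replicate (Suc a) False @ replicate b True"
      by simp
    then show ?thesis
      by blast
  next
    case True
    with Cons.prems P have "a = 0"
      by (cases a) auto
    with True P have "x # P = replicate 0 False @ replicate (Suc b) True"
      by simp
    then show ?thesis
      by blast
  qed
qed

lemma alternating_sorted_weight_cuts_False: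
  assumes "0 < m"
  shows "(\<Sum>k\<le>m. (-1) ^ k * (sorted_weight (take k (replicate m False))
                              * sorted_weight (rev (drop k (replicate m False))))) = 0"
proof -
  have "take k (replicate m False) = replicate k False @ replicate 0 True"
    "rev (drop k (replicate m False)) = replicate (m - k) False @ replicate 0 True" if "k \<le> m" for k
    using that by (simp_all add: min_absorb1)
  then have "(\<Sum>k\<le>m. (-1) ^ k * (sorted_weight (take k (replicate m False))
                              * sorted_weight (rev (drop k (replicate m False)))))
      = (\<Sum>k\<le>m. (-1) ^ k / (fact k * fact (m - k)))"
    by (intro sum.cong) (simp_all only: atMost_iff sorted_weight_replicate, simp)
  with sum_alternating_inverse_fact[OF assms] show ?thesis
    by simp
qed

lemma sorted_weight_cut_replicate:
  assumes "0 < t" "k \<le> a + t + d" and P: "P = replicate a False @ replicate t True @ replicate d False"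
  shows "sorted_weight (take k P) * sorted_weight (rev (drop k P))
    = (if a \<le> k \<and> k \<le> a + t then 1 / (fact a * fact d * fact (k - a) * fact (a + t - k)) else 0)"
proof -
  consider "k < a" | "a \<le> k \<and> k \<le> a + t" | "a + t < k"
    by linarith
  then show ?thesis
  proof cases
    case 1
    then have "rev (drop k P) = replicate d False @ replicate t True @ replicate (a - k) False"
      using P by simp
    then have "\<not> sorted (rev (drop k P))"
      using 1 assms(1) by (auto simp: sorted_append)
    with 1 show ?thesis
      by (simp add: sorted_weight_def)
  next
    case 2
    then have "take k P = replicate a False @ replicate (k - a) True"
      "rev (drop k P) = replicate d False @ replicate (a + t - k) True"
      using P by (auto simp: min_def)
    with 2 show ?thesis
      by (simp add: sorted_weight_replicate field_simps)
  next
    case 3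
    then have "take k P = replicate a False @ replicate t True @ replicate (k - a - t) False"
      using P assms(2) by (simp add: min_absorb1 min_absorb2)
    then have "\<not> sorted (take k P)"
      using 3 assms(1) by (auto simp: sorted_append)
    with 3 show ?thesis
      by (simp add: sorted_weight_def)
  qed
qed

lemma alternating_sorted_weight_cuts_replicate:
  assumes "0 < a + t + d" and P: "P = replicate a False @ replicate t True @ replicate d False"
  shows "(\<Sum>k\<le>length P. (-1) ^ k * (sorted_weight (take k P) * sorted_weight (rev (drop k P)))) = 0"
proof (cases "t = 0")
  case True
  with P have "P = replicate (a + d) False"
    by (simp add: replicate_add)
  with alternating_sorted_weight_cuts_False[of "a + d"] assms(1) True show ?thesis
    by simp
next
  case False
  define c where "c k = (-1) ^ k / (fact a * fact d * fact (k - a) * fact (a + t - k) :: rat)" for k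
  have "(\<Sum>k\<le>length P. (-1) ^ k * (sorted_weight (take k P) * sorted_weight (rev (drop k P))))
      = (\<Sum>k\<le>a + t + d. if a \<le> k \<and> k \<le> a + t then c k else 0)"
  proof (rule sum.cong)
    show "{..length P} = {..a + t + d}"
      using P by simp
    fix k
    assume "k \<in> {..a + t + d}"
    with sorted_weight_cut_replicate[of t k a d, OF _ _ P] False
    show "(-1) ^ k * (sorted_weight (take k P) * sorted_weight (rev (drop k P)))
        = (if a \<le> k \<and> k \<le> a + t then c k else 0)"
      by (simp add: c_def)
  qed
  also have "\<dots> = (\<Sum>k\<in>{a..a + t}. c k)"
    by (rule sum.mono_neutral_cong_right) auto
  also have "\<dots> = (\<Sum>q\<in>{0..t}. c (q + a))"
    using sum.shift_bounds_cl_nat_ivl[of c 0 a t] by (simp add: add.commute)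
  also have "\<dots> = (-1) ^ a / (fact a * fact d) * (\<Sum>q\<le>t. (-1) ^ q / (fact q * fact (t - q)))"
    by (simp add: c_def sum_distrib_left atLeast0AtMost power_add field_simps)
  also have "\<dots> = 0"
    using sum_alternating_inverse_fact[of t] False by simp
  finally show ?thesis .
qed

lemma alternating_sorted_weight_cuts:
  assumes "P \<noteq> []"
  shows "(\<Sum>k\<le>length P. (-1) ^ k * (sorted_weight (take k P) * sorted_weight (rev (drop k P)))) = 0"
proof (cases "\<exists>k. sorted (take k P) \<and> sorted (rev (drop k P))")
  case False
  then show ?thesis
    by (auto simp: sorted_weight_def intro!: sum.neutral)
next
  case True
  then obtain k where "sorted (take k P)" "sorted (rev (drop k P))"
    by blast
  then obtain a b c d where "take k P = replicate a False @ replicate b True"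
    and "rev (drop k P) = replicate d False @ replicate c True"
    using sorted_bool_list_eq_replicate by blast
  moreover have "drop k P = rev (rev (drop k P))"
    by simp
  ultimately have "P = replicate a False @ (replicate b True @ replicate c True) @ replicate d False"
    by (metis append_take_drop_id append_assoc rev_append rev_replicate)
  then have "P = replicate a False @ replicate (b + c) True @ replicate d False"
    by (simp add: replicate_add)
  moreover from this assms have "0 < a + (b + c) + d"
    by auto
  ultimately show ?thesis
    by (intro alternating_sorted_weight_cuts_replicate)
qed

section \<open>The weights of the shuffle functions\<close>

definition parity_weight :: "nat list \<Rightarrow> rat" where
  "parity_weight B =
     1 / (of_nat (fact (length (filter odd B))) * of_nat (fact (length (filter even B))))"

definition block_weight :: "nat list \<Rightarrow> rat" where
  "block_weight B = (if OtE B = {} then parity_weight B else 0)"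

lemma OtE_eq_empty_iff: "OtE B = {} \<longleftrightarrow> sorted (map odd B)"
proof -
  have "OtE B = {} \<longleftrightarrow> (\<forall>i. Suc i < length B \<longrightarrow> \<not> (odd (B ! i) \<and> even (B ! Suc i)))"
  proof
    assume "OtE B = {}"
    then show "\<forall>i. Suc i < length B \<longrightarrow> \<not> (odd (B ! i) \<and> even (B ! Suc i))"
      unfolding OtE_def by (metis (no_types, lifting) diff_Suc_1 empty_Collect_eq le_add1 plus_1_eq_Suc)
  next
    assume "\<forall>i. Suc i < length B \<longrightarrow> \<not> (odd (B ! i) \<and> even (B ! Suc i))"
    then show "OtE B = {}"
      unfolding OtE_def by (auto simp: Suc_le_eq dest!: gr0_implies_Suc)
  qed
  also have "\<dots> \<longleftrightarrow> sorted (map odd B)"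
    unfolding sorted_iff_nth_Suc by (auto simp: le_bool_def)
  finally show ?thesis .
qed

lemma block_weight_eq_sorted_weight: "block_weight B = sorted_weight (map odd B)"
  by (simp add: block_weight_def parity_weight_def sorted_weight_def OtE_eq_empty_iff filter_map
      comp_def)

lemma block_weight_Nil: "block_weight [] = 1"
  by (simp add: block_weight_eq_sorted_weight sorted_weight_def)

lemma alternating_block_weight_cuts:
  "A \<noteq> [] \<Longrightarrow> (\<Sum>k\<le>length A. (-1) ^ k * (block_weight (take k A) * block_weight (rev (drop k A)))) = 0"
  using alternating_sorted_weight_cuts[of "map odd A"]
  by (simp add: block_weight_eq_sorted_weight take_map drop_map rev_map)

lemma block_sum_neg_block_weight:
  "block_sum (\<lambda>B. - block_weight B) A = (-1) ^ length A * block_weight (rev A)"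
proof (induction A rule: measure_induct_rule[of length])
  case (less A)
  show ?case
  proof (cases "A = []")
    case True
    then show ?thesis
      by (simp add: block_sum_Nil block_weight_Nil)
  next
    case False
    define n where "n = length A"
    define w where "w k = (-1) ^ k * (block_weight (take k A) * block_weight (rev (drop k A)))" for k
    have "block_sum (\<lambda>B. - block_weight B) A
        = (\<Sum>k\<in>{1..n}. - block_weight (take k A) * ((-1) ^ (n - k) * block_weight (rev (drop k A))))"
      using False less.IH by (simp add: block_sum_first_block n_def)
    also have "\<dots> = - ((-1) ^ n * (\<Sum>k\<in>{1..n}. w k))"
      by (simp add: w_def sum_distrib_left power_diff_conv_inverse field_simps sum_negf)
    also have "(\<Sum>k\<in>{1..n}. w k) = (\<Sum>k\<le>n. w k) - w 0"
      by (simp add: atMost_atLeast0 sum.atLeast_Suc_atMost)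
    also have "(\<Sum>k\<le>n. w k) = 0"
      using alternating_block_weight_cuts[OF False] by (simp add: w_def n_def)
    finally show ?thesis
      by (simp add: w_def n_def block_weight_Nil)
  qed
qed

section \<open>The index set of the shuffle functions\<close>

lemma sum_list_take_mono: "i \<le> j \<Longrightarrow> sum_list (take i \<alpha>) \<le> sum_list (take j (\<alpha> :: nat list))"
  using take_add[of i "j - i" \<alpha>] by simp

lemma sum_list_take_le: "sum_list (take i \<alpha>) \<le> sum_list (\<alpha> :: nat list)"
  by (metis append_take_drop_id le_add1 sum_list_append)

lemma psums_pos: "is_comp \<beta> \<Longrightarrow> x \<in> psums \<beta> \<Longrightarrow> 0 < x"
  by (auto simp: psums_def intro!: is_comp_sum_list_pos is_comp_take)

lemma psums_Cons: "psums (b # \<beta>) = (if \<beta> = [] then {} else insert b ((+) b ` psums \<beta>))"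
proof (cases "\<beta> = []")
  case True
  then show ?thesis
    by (simp add: psums_def)
next
  case False
  have "x \<in> insert b ((+) b ` psums \<beta>)" if "x \<in> psums (b # \<beta>)" for x
  proof -
    obtain j where j: "x = sum_list (take (Suc j) (b # \<beta>))" "Suc j < length (b # \<beta>)"
      using \<open>x \<in> psums (b # \<beta>)\<close> by (auto simp: psums_def gr0_conv_Suc)
    show ?thesis
    proof (cases "j = 0")
      case True
      with j show ?thesis
        by simp
    next
      case False
      with j have "sum_list (take j \<beta>) \<in> psums \<beta>"
        by (auto simp: psums_def)
      with j show ?thesis
        by auto
    qed
  qed
  moreover have "x \<in> psums (b # \<beta>)" if "x \<in> insert b ((+) b ` psums \<beta>)" for x
  proof -
    have "\<exists>j. x = b + sum_list (take j \<beta>) \<and> j < length \<beta>"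
    proof (cases "x = b")
      case True
      with False show ?thesis
        by (intro exI[of _ 0]) simp
    next
      case False
      with that show ?thesis
        by (auto simp: psums_def)
    qed
    then obtain j where "x = b + sum_list (take j \<beta>)" "j < length \<beta>"
      by blast
    then have "x = sum_list (take (Suc j) (b # \<beta>))" "0 < Suc j" "Suc j < length (b # \<beta>)"
      by auto
    then show ?thesis
      unfolding psums_def by blast
  qed
  ultimately show ?thesis
    using False by auto
qed

lemma psums_sums_subset:
  assumes "Bs \<in> decomps \<alpha>"
  shows "psums (map sum_list Bs) \<subseteq> psums \<alpha>"
proof
  fix x
  assume "x \<in> psums (map sum_list Bs)"
  then obtain j where "x = sum_list (take j (map sum_list Bs))" "0 < j" "j < length Bs"
    by (auto simp: psums_def)
  then have j: "x = sum_list (concat (take j Bs))" "0 < j" "j < length Bs"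
    by (simp_all add: sum_list_concat take_map)
  have \<alpha>: "concat Bs = \<alpha>" "\<forall>B\<in>set Bs. B \<noteq> []"
    using assms by (auto simp: decomps_def)
  define k where "k = length (concat (take j Bs))"
  have nonempty: "concat Xs \<noteq> []" if "Xs \<noteq> []" "set Xs \<subseteq> set Bs" for Xs
    using that \<alpha>(2) by (cases Xs) auto
  have "concat (take j Bs) \<noteq> []"
    by (rule nonempty) (use j in \<open>auto simp: set_take_subset\<close>)
  moreover have "concat (drop j Bs) \<noteq> []"
    by (rule nonempty) (use j in \<open>auto simp: set_drop_subset\<close>)
  moreover have "length \<alpha> = k + length (concat (drop j Bs))"
    using \<alpha>(1) unfolding k_def by (metis append_take_drop_id concat_append length_append)
  ultimately have "0 < k" "k < length \<alpha>"
    by (simp_all add: k_def)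
  moreover have "x = sum_list (take k \<alpha>)"
    using j(1) concat_take_drop_decomp(2)[OF \<alpha>(1), of j] by (simp add: k_def)
  ultimately show "x \<in> psums \<alpha>"
    by (auto simp: psums_def)
qed

lemma psums_drop:
  assumes "is_comp \<alpha>" "0 < x" "sum_list (take i \<alpha>) + x \<in> psums \<alpha>"
  shows "x \<in> psums (drop i \<alpha>)"
proof -
  obtain i' where i': "sum_list (take i' \<alpha>) = sum_list (take i \<alpha>) + x" "0 < i'" "i' < length \<alpha>"
    using assms(3) by (auto simp: psums_def)
  have "i < i'"
    using sum_list_take_mono[of i' i \<alpha>] i'(1) assms(2) by (cases "i < i'") auto
  then have "x = sum_list (take (i' - i) (drop i \<alpha>))"
    using i'(1) take_add[of i "i' - i" \<alpha>] by simp
  moreover have "0 < i' - i" "i' - i < length (drop i \<alpha>)"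
    using \<open>i < i'\<close> i'(3) by auto
  ultimately show ?thesis
    by (auto simp: psums_def)
qed

lemma ex_decomp_if_psums_subset:
  "is_comp \<beta> \<Longrightarrow> is_comp \<alpha> \<Longrightarrow> sum_list \<beta> = sum_list \<alpha> \<Longrightarrow> psums \<beta> \<subseteq> psums \<alpha>
    \<Longrightarrow> \<exists>Bs\<in>decomps \<alpha>. \<beta> = map sum_list Bs"
proof (induction \<beta> arbitrary: \<alpha>)
  case Nil
  then have "sum_list \<alpha> = 0"
    by simp
  then have "\<alpha> = []"
    using is_comp_sum_list_pos[OF Nil.prems(2)] by (metis less_irrefl)
  then show ?case
    by (simp add: decomps_Nil)
next
  case (Cons b \<beta>)
  show ?case
  proof (cases "\<beta> = []")
    case True
    then have "\<alpha> \<noteq> []" "b = sum_list \<alpha>"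
      using Cons.prems by (auto simp: is_comp_def)
    then have "[\<alpha>] \<in> decomps \<alpha>" "b # \<beta> = map sum_list [\<alpha>]"
      using True by (simp_all add: decomps_def)
    then show ?thesis
      by (rule rev_bexI)
  next
    case False
    then have psums: "psums (b # \<beta>) = insert b ((+) b ` psums \<beta>)"
      by (simp add: psums_Cons)
    then obtain i where i: "b = sum_list (take i \<alpha>)" "0 < i" "i < length \<alpha>"
      using Cons.prems(4) by (auto simp: psums_def)
    have "is_comp \<beta>"
      using Cons.prems(1) by (simp add: is_comp_def)
    moreover have "psums \<beta> \<subseteq> psums (drop i \<alpha>)"
      using Cons.prems(2,4) psums psums_pos[OF \<open>is_comp \<beta>\<close>] i(1) by (auto intro!: psums_drop)
    moreover have "sum_list \<beta> = sum_list (drop i \<alpha>)"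
      using Cons.prems(3) i(1)
      by (metis add_left_cancel append_take_drop_id sum_list_append sum_list.Cons)
    ultimately obtain Bs where "Bs \<in> decomps (drop i \<alpha>)" "\<beta> = map sum_list Bs"
      using Cons.IH Cons.prems(2) is_comp_drop by blast
    with i have "take i \<alpha> # Bs \<in> decomps \<alpha>" "b # \<beta> = map sum_list (take i \<alpha> # Bs)"
      by (auto simp: decomps_def)
    then show ?thesis
      by (rule rev_bexI)
  qed
qed

lemma is_comp_map_sum_list: "Bs \<in> decomps \<alpha> \<Longrightarrow> is_comp \<alpha> \<Longrightarrow> is_comp (map sum_list Bs)"
  by (auto simp: is_comp_def decomps_def intro!: is_comp_sum_list_pos)

lemma blocks_map_sum_list: "is_comp \<alpha> \<Longrightarrow> Bs \<in> decomps \<alpha> \<Longrightarrow> blocks \<alpha> (map sum_list Bs) = Bs"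
proof (induction Bs arbitrary: \<alpha>)
  case Nil
  then show ?case
    by simp
next
  case (Cons B Bs)
  then have \<alpha>: "\<alpha> = B @ concat Bs" "B \<noteq> []" "Bs \<in> decomps (concat Bs)"
    by (auto simp: decomps_def)
  have "(LEAST k. sum_list (take k \<alpha>) = sum_list B) = length B"
  proof (rule Least_equality)
    show "sum_list (take (length B) \<alpha>) = sum_list B"
      using \<alpha>(1) by simp
    show "length B \<le> k" if "sum_list (take k \<alpha>) = sum_list B" for k
      using that sum_list_take_strict_mono[OF Cons.prems(1), of k "length B"] \<alpha>(1) by fastforce
  qed
  moreover have "is_comp (concat Bs)"
    using Cons.prems(1) \<alpha>(1) by (simp add: is_comp_def)
  ultimately show ?case
    using \<alpha> Cons.IH by (simp add: Let_def)
qed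

lemma coeff_c_map_sum_list:
  "is_comp \<alpha> \<Longrightarrow> Bs \<in> decomps \<alpha> \<Longrightarrow> coeff_c \<alpha> (map sum_list Bs) = prod_list (map parity_weight Bs)"
  unfolding coeff_c_def parity_weight_def[abs_def] by (simp add: blocks_map_sum_list)

lemma sum_list_take_diffs:
  assumes "sorted (L :: nat list)" "i < length L"
  shows "sum_list (take i (map (\<lambda>j. L ! Suc j - L ! j) [0..<length L - 1])) = L ! i - L ! 0"
  using assms(2)
proof (induction i)
  case 0
  then show ?case
    by simp
next
  case (Suc i)
  have "L ! 0 \<le> L ! i" "L ! i \<le> L ! Suc i"
    using assms(1) Suc.prems by (auto intro: sorted_nth_mono)
  moreover have "[0..<length L - 1] ! i = i"
    using Suc.prems by simp
  ultimately show ?case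
    using Suc by (simp add: take_Suc_conv_app_nth)
qed

lemma psums_comp_of_set:
  assumes "finite S" "\<forall>x\<in>S. x \<le> n"
  shows "psums (comp_of_set n S) = S"
proof -
  define L where "L = 0 # sorted_list_of_set S @ [n]"
  have "sorted L"
    using assms unfolding L_def by (auto simp: sorted_append)
  have comp: "comp_of_set n S = map (\<lambda>j. L ! Suc j - L ! j) [0..<length L - 1]"
    by (simp add: comp_of_set_def L_def Let_def)
  have "sum_list (take i (comp_of_set n S)) = L ! i" if "i < card S + 1" for i
    using sum_list_take_diffs[OF \<open>sorted L\<close>, of i] that unfolding comp by (simp add: L_def)
  moreover have "length (comp_of_set n S) = card S + 1"
    unfolding comp by (simp add: L_def)
  ultimately have "psums (comp_of_set n S) = {L ! i | i. 0 < i \<and> i < card S + 1}"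
    unfolding psums_def by (metis (no_types, opaque_lifting))
  also have "\<dots> = {sorted_list_of_set S ! j | j. j < card S}"
  proof (intro set_eqI iffI)
    fix x
    assume "x \<in> {L ! i | i. 0 < i \<and> i < card S + 1}"
    then obtain i where "x = L ! i" "0 < i" "i < card S + 1"
      by auto
    then show "x \<in> {sorted_list_of_set S ! j | j. j < card S}"
      by (cases i) (auto simp: L_def nth_append)
  next
    fix x
    assume "x \<in> {sorted_list_of_set S ! j | j. j < card S}"
    then obtain j where "x = sorted_list_of_set S ! j" "j < card S"
      by auto
    then have "x = L ! Suc j" "0 < Suc j" "Suc j < card S + 1"
      by (auto simp: L_def nth_append)
    then show "x \<in> {L ! i | i. 0 < i \<and> i < card S + 1}"
      by blast
  qed
  also have "\<dots> = set (sorted_list_of_set S)"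
    by (auto simp: in_set_conv_nth)
  also have "\<dots> = S"
    using assms(1) by simp
  finally show ?thesis .
qed

lemma finite_OtE: "finite (OtE \<alpha>)"
  by (rule finite_subset[of _ "{..<length \<alpha>}"]) (auto simp: OtE_def)

lemma psums_m_o: "\<alpha> \<noteq> [] \<Longrightarrow> psums (m_o \<alpha>) = (\<lambda>i. sum_list (take i \<alpha>)) ` OtE \<alpha>"
  unfolding m_o_def by (simp add: psums_comp_of_set finite_OtE sum_list_take_le)

lemma OtE_append_left: "i \<in> OtE B \<Longrightarrow> i \<in> OtE (B @ R)"
  by (auto simp: OtE_def nth_append)

lemma OtE_append_right: "i \<in> OtE R \<Longrightarrow> i + length B \<in> OtE (B @ R)"
  by (auto simp: OtE_def nth_append)

lemma OtE_appendD:
  assumes "i \<in> OtE (B @ R)"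
  shows "i \<in> OtE B \<or> i = length B \<or> (length B < i \<and> i - length B \<in> OtE R)"
proof -
  have i: "1 \<le> i" "i < length B + length R" "odd ((B @ R) ! (i - 1))" "even ((B @ R) ! i)"
    using assms by (auto simp: OtE_def)
  consider "i < length B" | "i = length B" | "length B < i"
    by linarith
  then show ?thesis
  proof cases
    case 1
    then have "(B @ R) ! (i - 1) = B ! (i - 1)" "(B @ R) ! i = B ! i"
      by (auto simp: nth_append)
    with i 1 show ?thesis
      by (auto simp: OtE_def)
  next
    case 3
    then have "(B @ R) ! (i - 1) = R ! (i - length B - 1)" "(B @ R) ! i = R ! (i - length B)"
      by (auto simp: nth_append)
    with i 3 show ?thesis
      by (auto simp: OtE_def)
  qed simp
qed

lemma sum_list_take_OtE_less:
  assumes "is_comp (B @ R)" "i \<in> OtE B"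
  shows "sum_list (take i (B @ R)) < sum_list B"
  using sum_list_take_strict_mono[OF assms(1), of i "length B"] assms(2) by (simp add: OtE_def)

lemma sum_list_take_OtE_pos:
  assumes "is_comp R" "j \<in> OtE R"
  shows "0 < sum_list (take j R)"
  using assms by (intro is_comp_sum_list_pos is_comp_take) (auto simp: OtE_def)

lemma OtE_psums_append_iff:
  assumes "is_comp (B @ R)"
  shows "(\<lambda>i. sum_list (take i (B @ R))) ` OtE (B @ R) \<subseteq> insert (sum_list B) ((+) (sum_list B) ` P)
     \<longleftrightarrow> OtE B = {} \<and> (\<lambda>i. sum_list (take i R)) ` OtE R \<subseteq> P"
    (is "?s ` _ \<subseteq> ?PS \<longleftrightarrow> _")
proof
  assume sub: "?s ` OtE (B @ R) \<subseteq> ?PS"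
  have "?s i \<notin> ?PS" if "i \<in> OtE B" for i
    using sum_list_take_OtE_less[OF assms that] by auto
  then have "OtE B = {}"
    using sub by (blast dest: OtE_append_left)
  moreover have "sum_list (take j R) \<in> P" if "j \<in> OtE R" for j
  proof -
    have "0 < sum_list (take j R)"
      using assms that by (intro sum_list_take_OtE_pos) (simp_all add: is_comp_def)
    then have "sum_list B + sum_list (take j R) \<noteq> sum_list B"
      by linarith
    moreover have "?s (j + length B) = sum_list B + sum_list (take j R)"
      by simp
    moreover have "?s (j + length B) \<in> ?PS"
      by (rule subsetD[OF sub imageI[OF OtE_append_right[OF that]]])
    ultimately show ?thesis
      by auto
  qed
  ultimately show "OtE B = {} \<and> (\<lambda>i. sum_list (take i R)) ` OtE R \<subseteq> P"
    by auto
next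
  assume asm: "OtE B = {} \<and> (\<lambda>i. sum_list (take i R)) ` OtE R \<subseteq> P"
  show "?s ` OtE (B @ R) \<subseteq> ?PS"
  proof (rule image_subsetI)
    fix i
    assume "i \<in> OtE (B @ R)"
    then consider "i = length B" | "length B < i" "i - length B \<in> OtE R"
      using OtE_appendD asm by blast
    then show "?s i \<in> ?PS"
    proof cases
      case 1
      then show ?thesis
        by simp
    next
      case 2
      then have "?s i = sum_list B + sum_list (take (i - length B) R)"
        by simp
      with 2(2) asm show ?thesis
        by blast
    qed
  qed
qed

lemma OtE_psums_subset_iff:
  "is_comp \<alpha> \<Longrightarrow> Bs \<in> decomps \<alpha> \<Longrightarrow>
   (\<lambda>i. sum_list (take i \<alpha>)) ` OtE \<alpha> \<subseteq> psums (map sum_list Bs) \<longleftrightarrow> (\<forall>B\<in>set Bs. OtE B = {})"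
proof (induction Bs arbitrary: \<alpha>)
  case Nil
  then show ?case
    by (simp add: decomps_def OtE_def)
next
  case (Cons B Bs)
  then have \<alpha>: "\<alpha> = B @ concat Bs" "Bs \<in> decomps (concat Bs)"
    by (auto simp: decomps_def)
  show ?case
  proof (cases "Bs = []")
    case True
    with \<alpha> show ?thesis
      by (simp add: psums_def)
  next
    case False
    have "is_comp (concat Bs)"
      using Cons.prems(1) \<alpha>(1) by (simp add: is_comp_def)
    moreover have "psums (map sum_list (B # Bs))
        = insert (sum_list B) ((+) (sum_list B) ` psums (map sum_list Bs))"
      using False by (simp add: psums_Cons)
    ultimately have "(\<lambda>i. sum_list (take i \<alpha>)) ` OtE \<alpha> \<subseteq> psums (map sum_list (B # Bs))
        \<longleftrightarrow> OtE B = {} \<and> (\<lambda>i. sum_list (take i (concat Bs))) ` OtE (concat Bs) \<subseteq> psums (map sum_list Bs)"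
      using Cons.prems(1) OtE_psums_append_iff[of B "concat Bs"] unfolding \<alpha>(1) by simp
    with Cons.IH[OF \<open>is_comp (concat Bs)\<close> \<alpha>(2)] show ?thesis
      by simp
  qed
qed

lemma comp_le_m_o_iff:
  assumes "is_comp \<alpha>" "Bs \<in> decomps \<alpha>"
  shows "comp_le (m_o \<alpha>) (map sum_list Bs) \<longleftrightarrow> (\<forall>B\<in>set Bs. OtE B = {})"
proof (cases "\<alpha> = []")
  case True
  with assms(2) show ?thesis
    by (simp add: decomps_Nil comp_le_def m_o_def psums_def)
next
  case False
  with assms show ?thesis
    by (simp add: comp_le_def psums_m_o OtE_psums_subset_iff)
qed

lemma shuffle_index_eq:
  assumes "is_comp \<alpha>"
  shows "shuffle_index \<alpha> = map sum_list ` {Bs\<in>decomps \<alpha>. \<forall>B\<in>set Bs. OtE B = {}}"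
proof (intro set_eqI iffI)
  fix \<beta>
  assume "\<beta> \<in> shuffle_index \<alpha>"
  then have \<beta>: "is_comp \<beta>" "sum_list \<beta> = sum_list \<alpha>" "comp_le (m_o \<alpha>) \<beta>" "comp_le \<beta> \<alpha>"
    by (auto simp: shuffle_index_def)
  then obtain Bs where "Bs \<in> decomps \<alpha>" "\<beta> = map sum_list Bs"
    using ex_decomp_if_psums_subset[OF \<beta>(1) assms \<beta>(2)] by (auto simp: comp_le_def)
  with \<beta>(3) assms show "\<beta> \<in> map sum_list ` {Bs\<in>decomps \<alpha>. \<forall>B\<in>set Bs. OtE B = {}}"
    by (auto simp: comp_le_m_o_iff)
next
  fix \<beta>
  assume "\<beta> \<in> map sum_list ` {Bs\<in>decomps \<alpha>. \<forall>B\<in>set Bs. OtE B = {}}"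
  then obtain Bs where Bs: "Bs \<in> decomps \<alpha>" "\<forall>B\<in>set Bs. OtE B = {}" "\<beta> = map sum_list Bs"
    by blast
  then have "sum_list \<beta> = sum_list \<alpha>"
    by (simp add: decomps_def flip: sum_list_concat)
  moreover have "comp_le (m_o \<alpha>) \<beta>"
    using comp_le_m_o_iff[OF assms Bs(1)] Bs by simp
  ultimately show "\<beta> \<in> shuffle_index \<alpha>"
    using Bs assms by (simp add: shuffle_index_def comp_le_def is_comp_map_sum_list psums_sums_subset)
qed

lemma sum_shuffle_index:
  assumes "is_comp \<alpha>"
  shows "(\<Sum>\<beta>\<in>shuffle_index \<alpha>. coeff_c \<alpha> \<beta> * f \<beta>)
       = (\<Sum>Bs\<in>decomps \<alpha>. prod_list (map block_weight Bs) * f (map sum_list Bs))"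
proof -
  define D where "D = {Bs\<in>decomps \<alpha>. \<forall>B\<in>set Bs. OtE B = {}}"
  have "inj_on (map sum_list) D"
    using blocks_map_sum_list[OF assms] by (metis (mono_tags, lifting) D_def inj_onI mem_Collect_eq)
  then have "(\<Sum>\<beta>\<in>shuffle_index \<alpha>. coeff_c \<alpha> \<beta> * f \<beta>)
      = (\<Sum>Bs\<in>D. coeff_c \<alpha> (map sum_list Bs) * f (map sum_list Bs))"
    unfolding shuffle_index_eq[OF assms] D_def[symmetric] by (simp add: sum.reindex)
  also have "\<dots> = (\<Sum>Bs\<in>D. prod_list (map block_weight Bs) * f (map sum_list Bs))"
    using assms
    by (intro sum.cong) (auto simp: D_def coeff_c_map_sum_list block_weight_def cong: map_cong)
  also have "\<dots> = (\<Sum>Bs\<in>decomps \<alpha>. prod_list (map block_weight Bs) * f (map sum_list Bs))"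
  proof (rule sum.mono_neutral_left)
    show "\<forall>Bs\<in>decomps \<alpha> - D. prod_list (map block_weight Bs) * f (map sum_list Bs) = 0"
      by (auto simp: D_def block_weight_def prod_list_zero_iff image_iff)
  qed (auto simp: D_def finite_decomps)
  finally show ?thesis .
qed

section \<open>The antipode of the shuffle functions\<close>

lemma decomps_rev: "As \<in> decomps \<alpha> \<Longrightarrow> rev (map rev As) \<in> decomps (rev \<alpha>)"
  by (auto simp: decomps_def rev_concat rev_map)

lemma sum_decomps_rev:
  fixes f :: "'a list \<Rightarrow> 'b :: comm_semiring_1"
  shows "(\<Sum>As\<in>decomps \<alpha>. (if rev (map g As) = \<gamma> then 1 else 0) * prod_list (map f As))
       = (\<Sum>As\<in>decomps (rev \<alpha>). (if map (g \<circ> rev) As = \<gamma> then 1 else 0) * prod_list (map (f \<circ> rev) As))"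
proof (rule sum.reindex_bij_witness[where i = "\<lambda>As. rev (map rev As)" and j = "\<lambda>As. rev (map rev As)"])
  fix As
  assume "As \<in> decomps (rev \<alpha>)"
  then show "rev (map rev (rev (map rev As))) = As" "rev (map rev As) \<in> decomps \<alpha>"
    using decomps_rev[of As "rev \<alpha>"] by (simp_all add: rev_map)
next
  fix As
  assume "As \<in> decomps \<alpha>"
  then show "rev (map rev As) \<in> decomps (rev \<alpha>)"
    by (rule decomps_rev)
  show "rev (map rev (rev (map rev As))) = As"
    by (simp add: rev_map)
  show "(if map (g \<circ> rev) (rev (map rev As)) = \<gamma> then 1 else 0)
        * prod_list (map (f \<circ> rev) (rev (map rev As)))
      = (if rev (map g As) = \<gamma> then 1 else 0) * prod_list (map f As)"
    by (simp add: rev_map comp_def prod_list.rev[of "map f As", unfolded rev_map])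
qed

lemma prod_list_map_uminus:
  "prod_list (map (\<lambda>x. - f x) xs) = (-1) ^ length xs * prod_list (map f xs :: 'a :: comm_ring_1 list)"
  by (induction xs) auto

lemma prod_list_map_sign:
  "prod_list (map (\<lambda>A. (-1) ^ length A * f A) As)
     = (-1) ^ length (concat As) * prod_list (map f As :: 'a :: comm_ring_1 list)"
  by (induction As) (auto simp: power_add)

lemma sum_decomps_prod_sign:
  fixes f :: "'a list \<Rightarrow> 'b :: comm_ring_1"
  shows "(\<Sum>As\<in>decomps \<alpha>. c As * prod_list (map (\<lambda>A. (-1) ^ length A * f A) As))
       = (-1) ^ length \<alpha> * (\<Sum>As\<in>decomps \<alpha>. c As * prod_list (map f As))"
  unfolding sum_distrib_left prod_list_map_sign
  by (intro sum.cong) (auto simp: decomps_def mult_ac)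

lemma is_comp_rev: "is_comp (rev \<alpha>) = is_comp \<alpha>"
  by (simp add: is_comp_def)

theorem mainTheorem4:
  fixes \<alpha> :: "nat list"
  assumes "is_comp \<alpha>"
  shows "antipode_shuffleS \<alpha> = (\<lambda>e. (-1) ^ length \<alpha> * shuffleS (rev \<alpha>) e)"
proof
  fix e
  define \<gamma> where "\<gamma> = exponent_comp e"
  define \<chi> where "\<chi> As = (if rev (map sum_list As) = \<gamma> then 1 else 0 :: rat)" for As
  have "antipode_shuffleS \<alpha> e
      = (\<Sum>Bs\<in>decomps \<alpha>. prod_list (map block_weight Bs) * antipodeM (map sum_list Bs) e)"
    unfolding antipode_shuffleS_def by (rule sum_shuffle_index[OF assms])
  also have "\<dots> = (\<Sum>Bs\<in>decomps \<alpha>.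
      prod_list (map (\<lambda>B. - block_weight B) Bs) * rev_coarsenings \<gamma> (map sum_list Bs))"
    using assms by (intro sum.cong)
      (simp_all add: antipodeM_eq is_comp_map_sum_list prod_list_map_uminus \<gamma>_def)
  also have "\<dots> = (\<Sum>As\<in>decomps \<alpha>. \<chi> As * prod_list (map (\<lambda>A. (-1) ^ length A * block_weight (rev A)) As))"
    unfolding sum_decomps_regroup \<chi>_def block_sum_neg_block_weight ..
  also have "\<dots> = (-1) ^ length \<alpha> * (\<Sum>As\<in>decomps \<alpha>. \<chi> As * prod_list (map (block_weight \<circ> rev) As))"
    by (simp add: sum_decomps_prod_sign comp_def)
  also have "\<dots> = (-1) ^ length \<alpha> * (\<Sum>As\<in>decomps (rev \<alpha>). (if map sum_list As = \<gamma> then 1 else 0)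
                                                       * prod_list (map block_weight As))"
    unfolding \<chi>_def sum_decomps_rev by (simp add: comp_def)
  also have "\<dots> = (-1) ^ length \<alpha> * shuffleS (rev \<alpha>) e"
    using assms
    by (simp add: shuffleS_def sum_shuffle_index is_comp_rev monoM_eq \<gamma>_def mult.commute eq_commute)
  finally show "antipode_shuffleS \<alpha> e = (-1) ^ length \<alpha> * shuffleS (rev \<alpha>) e" .
qed

end
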